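(* Let $G$ be an undirected graph. If all the prime components of $G$ are Generalized Bartlett graphs, then $G$ is a Generalized Bartlett graph.
   Context: A graph $G=(V,E)$ has a decomposition into components $G_1=(V_1,E_1)$ and $G_2=(V_2,E_2)$ (the induced subgraphs on $V_1,V_2$) if $V=V_1\cup V_2$ with $(V_1\setminus V_2)\cup(V_2\setminus V_1)\ne\emptyset$, $V_1\cap V_2\neq\emptyset$ induces a complete subgraph, and $V_1\cap V_2$ separates $V_1\setminus V_2$ from $V_2\setminus V_1$ (no edge joins a vertex of $V_1\setminus V_2$ to one of $V_2\setminus V_1$). A graph admitting no such decomposition is prime; repeated decomposition breaks any graph into prime components. For an ordering $\sigma:V\to\{1,\dots,p\}$, set $E^\sigma_0=E$, $E^\sigma_i=E^\sigma_{i-1}\cup\{\{u,v\}:u\ne v,\sigma(u)>i,\sigma(v)>i,\{u,\sigma^{-1}(i)\},\{v,\sigma^{-1}(i)\}\in E^\sigma_{i-1}\}$ for $i=1,\dots,p-2$, and $D^\sigma(E)=E^\sigma_{p-2}$. $G$ is Generalized Bartlett if some ordering $\sigma$ admits no $u,v,w$ with $\{u,v\},\{v,w\},\{u,w\}\notin E$ but all in $D^\sigma(E)$. *)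

theory Defs
  imports Main
begin

definition graph :: "'a set \<Rightarrow> 'a set set \<Rightarrow> bool" where
  "graph V E \<longleftrightarrow> finite V \<and> (\<forall>e\<in>E. \<exists>u v. u \<noteq> v \<and> u \<in> V \<and> v \<in> V \<and> e = {u, v})"

definition induced :: "'a set set \<Rightarrow> 'a set \<Rightarrow> 'a set set" where
  "induced E W = {e \<in> E. e \<subseteq> W}"

definition complete_in :: "'a set \<Rightarrow> 'a set set \<Rightarrow> bool" where
  "complete_in C E \<longleftrightarrow> (\<forall>u\<in>C. \<forall>v\<in>C. u \<noteq> v \<longrightarrow> {u, v} \<in> E)"

definition decomposes :: "'a set \<Rightarrow> 'a set set \<Rightarrow> 'a set \<Rightarrow> 'a set \<Rightarrow> bool" where
  "decomposes V E V1 V2 \<longleftrightarrow>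
     V = V1 \<union> V2 \<and> V1 - V2 \<noteq> {} \<and> V2 - V1 \<noteq> {} \<and> V1 \<inter> V2 \<noteq> {} \<and>
     complete_in (V1 \<inter> V2) E \<and>
     (\<forall>u\<in>V1 - V2. \<forall>v\<in>V2 - V1. {u, v} \<notin> E)"

definition prime_graph :: "'a set \<Rightarrow> 'a set set \<Rightarrow> bool" where
  "prime_graph V E \<longleftrightarrow> \<not> (\<exists>V1 V2. decomposes V E V1 V2)"

inductive prime_comp :: "'a set \<Rightarrow> 'a set set \<Rightarrow> 'a set \<Rightarrow> 'a set set \<Rightarrow> bool" where
  self: "prime_graph V E \<Longrightarrow> prime_comp V E V E"
| left: "decomposes V E V1 V2 \<Longrightarrow> prime_comp V1 (induced E V1) W F \<Longrightarrow> prime_comp V E W F"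
| right: "decomposes V E V1 V2 \<Longrightarrow> prime_comp V2 (induced E V2) W F \<Longrightarrow> prime_comp V E W F"

text \<open>Elimination/fill-in edge sets E^sigma_i for an ordering sigma : V -> {1..p}.\<close>
fun fill :: "'a set \<Rightarrow> ('a \<Rightarrow> nat) \<Rightarrow> 'a set set \<Rightarrow> nat \<Rightarrow> 'a set set" where
  "fill V \<sigma> E 0 = E"
| "fill V \<sigma> E (Suc i) = fill V \<sigma> E i \<union>
     {{u, v} | u v. u \<noteq> v \<and> u \<in> V \<and> v \<in> V \<and> \<sigma> u > Suc i \<and> \<sigma> v > Suc i \<and>
        {u, the_inv_into V \<sigma> (Suc i)} \<in> fill V \<sigma> E i \<and>
        {v, the_inv_into V \<sigma> (Suc i)} \<in> fill V \<sigma> E i}"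

definition D :: "'a set \<Rightarrow> ('a \<Rightarrow> nat) \<Rightarrow> 'a set set \<Rightarrow> 'a set set" where
  "D V \<sigma> E = fill V \<sigma> E (card V - 2)"

definition gen_bartlett :: "'a set \<Rightarrow> 'a set set \<Rightarrow> bool" where
  "gen_bartlett V E \<longleftrightarrow> (\<exists>\<sigma>. bij_betw \<sigma> V {1..card V} \<and>
     \<not> (\<exists>u v w. {u, v} \<notin> E \<and> {v, w} \<notin> E \<and> {u, w} \<notin> E \<and>
              {u, v} \<in> D V \<sigma> E \<and> {v, w} \<in> D V \<sigma> E \<and> {u, w} \<in> D V \<sigma> E))"

end

theory Submission
  imports Defs
begin

text \<open>For a decomposition with clique separator \<open>C\<close>, take
  Generalized Bartlett orders of the two parts and rearrange each so that \<open>C\<close> is eliminated last,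
  which creates no new fill edge. Eliminating first the private vertices of \<open>V1\<close>, then those of
  \<open>V2\<close>, then \<open>C\<close>, every fill edge of the whole graph is an edge or a fill edge of one part; a
  triangle of non-edges would have to use both parts, but non-edge fill edges of a part stay
  off \<open>C\<close> and so cannot meet across it.\<close>

definition elim_edges :: "'a set set \<Rightarrow> 'a \<Rightarrow> 'a set \<Rightarrow> 'a set set" where
  "elim_edges E x S = {{u, v} | u v. u \<noteq> v \<and> u \<in> S \<and> v \<in> S \<and> {u, x} \<in> E \<and> {v, x} \<in> E}"

text \<open>For \<open>R = {}\<close> this is \<open>D\<close> of the
  ordering listed by \<open>xs\<close> (see \<open>D_eq_elim_fill\<close>).\<close>
fun elim_fill :: "'a set set \<Rightarrow> 'a list \<Rightarrow> 'a set \<Rightarrow> 'a set set" where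
  "elim_fill E [] R = E"
| "elim_fill E (x # xs) R = elim_fill (E \<union> elim_edges E x (set xs \<union> R)) xs R"

definition pairs :: "'a set \<Rightarrow> 'a set set" where
  "pairs S = {{u, v} | u v. u \<noteq> v \<and> u \<in> S \<and> v \<in> S}"

definition no_fill_triangle :: "'a set set \<Rightarrow> 'a set set \<Rightarrow> bool" where
  "no_fill_triangle E F \<longleftrightarrow> \<not> (\<exists>u v w. {u, v} \<notin> E \<and> {v, w} \<notin> E \<and> {u, w} \<notin> E \<and>
     {u, v} \<in> F \<and> {v, w} \<in> F \<and> {u, w} \<in> F)"

definition bartlett_order :: "'a set set \<Rightarrow> 'a list \<Rightarrow> bool" where
  "bartlett_order E xs \<longleftrightarrow> no_fill_triangle E (elim_fill E xs {})"

lemma doubleton_in_pairs_iff [simp]: "{u, v} \<in> pairs S \<longleftrightarrow> u \<noteq> v \<and> u \<in> S \<and> v \<in> S"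
  by (auto simp: pairs_def doubleton_eq_iff)

lemma pairs_mono: "S \<subseteq> T \<Longrightarrow> pairs S \<subseteq> pairs T"
  by (auto simp: pairs_def)

lemma pairs_subset_iff_complete_in: "pairs S \<subseteq> E \<longleftrightarrow> complete_in S E"
  by (auto simp: pairs_def complete_in_def)

lemma elim_edges_subset_pairs: "elim_edges E x S \<subseteq> pairs S"
  by (auto simp: elim_edges_def pairs_def)

lemma elim_edges_mono: "E \<subseteq> E' \<Longrightarrow> S \<subseteq> S' \<Longrightarrow> elim_edges E x S \<subseteq> elim_edges E' x S'"
  unfolding elim_edges_def by blast

lemma elim_fill_append: "elim_fill E (xs @ ys) R = elim_fill (elim_fill E xs (set ys \<union> R)) ys R"
  by (induction xs arbitrary: E) (simp_all add: Un_assoc)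

lemma subset_elim_fill: "E \<subseteq> elim_fill E xs R"
  by (induction xs arbitrary: E) (simp, fastforce)

lemma elim_fill_subset_pairs: "elim_fill E xs R \<subseteq> E \<union> pairs (set xs \<union> R)"
proof (induction xs arbitrary: E)
  case (Cons x xs)
  have "pairs (set xs \<union> R) \<subseteq> pairs (set (x # xs) \<union> R)"
    by (rule pairs_mono) auto
  then have "elim_edges E x (set xs \<union> R) \<union> pairs (set xs \<union> R) \<subseteq> pairs (set (x # xs) \<union> R)"
    using elim_edges_subset_pairs[of E x "set xs \<union> R"] by blast
  with Cons.IH[of "E \<union> elim_edges E x (set xs \<union> R)"] show ?case by auto
qed simp

lemma elim_fill_mono: "E \<subseteq> E' \<Longrightarrow> R \<subseteq> R' \<Longrightarrow> elim_fill E xs R \<subseteq> elim_fill E' xs R'"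
proof (induction xs arbitrary: E E')
  case (Cons x xs)
  have "elim_edges E x (set xs \<union> R) \<subseteq> elim_edges E' x (set xs \<union> R')"
    using Cons.prems by (intro elim_edges_mono) auto
  then show ?case
    using Cons.IH[of "E \<union> elim_edges E x (set xs \<union> R)" "E' \<union> elim_edges E' x (set xs \<union> R')"] Cons.prems
    by auto
qed simp

lemma elim_fill_short: "length xs \<le> 2 \<Longrightarrow> elim_fill E xs {} = E"
  by (cases xs rule: remdups_adj.cases) (auto simp: elim_edges_def)

lemma elim_fill_insert_nonadjacent:
  "\<forall>z\<in>set zs. {x, z} \<notin> E \<Longrightarrow> elim_fill E zs (insert x R) = elim_fill E zs R"
proof (induction zs arbitrary: E)
  case (Cons z zs)
  have "{x, z} \<notin> E" using Cons.prems by simp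
  then have edges: "elim_edges E z (set zs \<union> insert x R) = elim_edges E z (set zs \<union> R)"
    unfolding elim_edges_def by auto
  have "\<forall>z'\<in>set zs. {x, z'} \<notin> E \<union> elim_edges E z (set zs \<union> R)"
    using Cons.prems \<open>{x, z} \<notin> E\<close> by (auto simp: elim_edges_def doubleton_eq_iff insert_commute)
  with Cons.IH edges show ?case by simp
qed simp

text \<open>The vertices of \<open>ws\<close> come last and already span a clique of \<open>E'\<close>, so they add no fill;
  and \<open>x\<close>, having no neighbour in \<open>zs\<close>, takes no part in eliminating \<open>zs\<close>.\<close>
lemma elim_fill_postpone:
  assumes E': "E \<subseteq> E'"
    and nonadjacent: "\<forall>z\<in>set zs. {x, z} \<notin> E"
    and ws: "set ws = insert x (set ns)"
    and complete: "complete_in (insert x (set ns)) E'"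
  shows "elim_fill E (zs @ ws) {} \<subseteq> elim_fill E' (zs @ ns) {}"
proof -
  let ?N = "set ns"
  have "elim_fill E zs (insert x ?N) = elim_fill E zs ?N"
    using nonadjacent by (rule elim_fill_insert_nonadjacent)
  also have "\<dots> \<subseteq> elim_fill E' zs ?N"
    using E' by (intro elim_fill_mono) auto
  also have "\<dots> \<subseteq> elim_fill E' (zs @ ns) {}"
    using subset_elim_fill by (simp add: elim_fill_append)
  finally have zs_part: "elim_fill E zs (insert x ?N) \<subseteq> elim_fill E' (zs @ ns) {}" .
  have "pairs (insert x ?N) \<subseteq> E'"
    using complete by (simp add: pairs_subset_iff_complete_in)
  also have "E' \<subseteq> elim_fill E' (zs @ ns) {}"
    by (rule subset_elim_fill)
  finally have "pairs (insert x ?N) \<subseteq> elim_fill E' (zs @ ns) {}" .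
  moreover have "elim_fill E (zs @ ws) {} \<subseteq> elim_fill E zs (insert x ?N) \<union> pairs (insert x ?N)"
    using elim_fill_subset_pairs[of "elim_fill E zs (insert x ?N)" ws "{}"] ws
    by (simp add: elim_fill_append)
  ultimately show ?thesis
    using zs_part by blast
qed

text \<open>A vertex \<open>x \<in> K\<close> met first is moved to just after its neighbourhood, which by induction
  can itself be eliminated last.\<close>
lemma elim_fill_clique_last:
  assumes "distinct xs" "K \<subseteq> set xs" "complete_in K E"
  shows "\<exists>ys ks. distinct (ys @ ks) \<and> set (ys @ ks) = set xs \<and> set ks = K \<and>
    elim_fill E (ys @ ks) {} \<subseteq> elim_fill E xs {}"
  using assms
proof (induction xs arbitrary: E K)
  case Nil
  then show ?case by auto
next
  case (Cons x xs)
  define E' where "E' = E \<union> elim_edges E x (set xs)"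
  have fill_Cons: "elim_fill E (x # zs) {} = elim_fill E' zs {}" if "set zs = set xs" for zs
    using that by (simp add: E'_def)
  have "E \<subseteq> E'" by (simp add: E'_def)
  have x: "distinct xs" "x \<notin> set xs" using Cons.prems(1) by auto
  show ?case
  proof (cases "x \<in> K")
    case False
    have "K \<subseteq> set xs" "complete_in K E'"
      using Cons.prems(2,3) False \<open>E \<subseteq> E'\<close> by (auto simp: complete_in_def)
    then obtain ys ks where ys_ks: "distinct (ys @ ks)" "set (ys @ ks) = set xs" "set ks = K"
        "elim_fill E' (ys @ ks) {} \<subseteq> elim_fill E' xs {}"
      using Cons.IH x(1) by blast
    then have "elim_fill E ((x # ys) @ ks) {} \<subseteq> elim_fill E (x # xs) {}"
      using fill_Cons by simp
    moreover have "distinct ((x # ys) @ ks)" "set ((x # ys) @ ks) = set (x # xs)"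
      using ys_ks x by auto
    ultimately show ?thesis
      using ys_ks(3) by blast
  next
    case True
    define N where "N = {u \<in> set xs. {u, x} \<in> E}"
    have "N \<subseteq> set xs" "complete_in N E'"
      unfolding complete_in_def E'_def elim_edges_def N_def by blast+
    then obtain zs ns where zs_ns: "distinct (zs @ ns)" "set (zs @ ns) = set xs" "set ns = N"
        "elim_fill E' (zs @ ns) {} \<subseteq> elim_fill E' xs {}"
      using Cons.IH[OF x(1)] by blast
    have "finite (N - K)" "finite (K - {x})"
      using \<open>N \<subseteq> set xs\<close> Cons.prems(2) by (auto intro: finite_subset)
    then obtain ms ks where ms: "distinct ms" "set ms = N - K" and ks: "distinct ks" "set ks = K - {x}"
      by (meson finite_distinct_list)
    have "K - {x} \<subseteq> N"
      using Cons.prems(2,3) True by (auto simp: N_def complete_in_def)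
    then have ws: "set (ms @ x # ks) = insert x (set ns)"
      using ms ks zs_ns(3) True by auto
    have nonadjacent: "\<forall>z\<in>set zs. {x, z} \<notin> E"
      using zs_ns(1-3) by (auto simp: N_def insert_commute)
    have "complete_in (insert x (set ns)) E'"
      using \<open>complete_in N E'\<close> zs_ns(3) by (auto simp: complete_in_def N_def E'_def insert_commute)
    then have "elim_fill E ((zs @ ms) @ x # ks) {} \<subseteq> elim_fill E' (zs @ ns) {}"
      using elim_fill_postpone[OF \<open>E \<subseteq> E'\<close> nonadjacent ws] by simp
    also have "\<dots> \<subseteq> elim_fill E (x # xs) {}"
      using zs_ns(4) fill_Cons[of xs] by simp
    finally have "elim_fill E ((zs @ ms) @ x # ks) {} \<subseteq> elim_fill E (x # xs) {}" .
    moreover have "distinct ((zs @ ms) @ x # ks)" "set ((zs @ ms) @ x # ks) = set (x # xs)"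
      using zs_ns ms ks ws x by auto
    moreover have "set (x # ks) = K"
      using ks True by auto
    ultimately show ?thesis
      by blast
  qed
qed

lemma elim_fill_induced:
  assumes "set zs \<subseteq> W" "\<forall>z\<in>set zs. \<forall>u\<in>set zs \<union> R. {u, z} \<in> E \<longrightarrow> u \<in> W"
  shows "elim_fill E zs R \<subseteq> E \<union> elim_fill (induced E W) zs (R \<inter> W)"
  using assms
proof (induction zs arbitrary: E)
  case (Cons z zs)
  define C where "C = elim_edges E z (set zs \<union> R)"
  have C_induced: "C = elim_edges (induced E W) z (set zs \<union> (R \<inter> W))"
    using Cons.prems unfolding C_def elim_edges_def induced_def by auto
  have "C \<subseteq> Pow W"
    using Cons.prems unfolding C_def elim_edges_def by auto
  then have induced_Un: "induced (E \<union> C) W = induced E W \<union> C"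
    by (auto simp: induced_def)
  have "\<forall>z'\<in>set zs. \<forall>u\<in>set zs \<union> R. {u, z'} \<in> E \<union> C \<longrightarrow> u \<in> W"
    using Cons.prems unfolding C_def elim_edges_def by (auto simp: doubleton_eq_iff)
  then have "elim_fill (E \<union> C) zs R \<subseteq> E \<union> C \<union> elim_fill (induced E W \<union> C) zs (R \<inter> W)"
    using Cons.IH[of "E \<union> C"] Cons.prems(1) by (simp add: induced_Un)
  moreover have "C \<subseteq> elim_fill (induced E W \<union> C) zs (R \<inter> W)"
    using subset_elim_fill by blast
  ultimately show ?case
    by (auto simp: C_def[symmetric] C_induced[symmetric])
qed simp

lemma no_fill_triangle_antimono:
  "no_fill_triangle E F \<Longrightarrow> E \<subseteq> E' \<Longrightarrow> F' \<subseteq> F \<Longrightarrow> no_fill_triangle E' F'"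
  unfolding no_fill_triangle_def by blast

text \<open>Fill edges that are not edges avoid the clique \<open>V1 \<inter> V2\<close>, so a triangle of them cannot
  use fill edges from both sides.\<close>
lemma no_fill_triangle_Un:
  assumes "no_fill_triangle E G1" "no_fill_triangle E G2"
    and "G1 \<subseteq> E \<union> pairs V1" "G2 \<subseteq> E \<union> pairs V2" "complete_in (V1 \<inter> V2) E"
  shows "no_fill_triangle E (E \<union> G1 \<union> G2)"
proof -
  have side: "u \<in> V1 \<and> v \<in> V1 \<and> \<not> (u \<in> V2 \<and> v \<in> V2)"
    if "{u, v} \<in> G1" "{u, v} \<notin> E" for u v
    using that assms(3,5) by (auto simp: complete_in_def)
  have side': "u \<in> V2 \<and> v \<in> V2 \<and> \<not> (u \<in> V1 \<and> v \<in> V1)"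
    if "{u, v} \<in> G2" "{u, v} \<notin> E" for u v
    using that assms(4,5) by (auto simp: complete_in_def)
  show ?thesis
    using assms(1,2) unfolding no_fill_triangle_def
    by (smt (verit) Un_iff side side')
qed

lemma elim_fill_decomposition:
  assumes dec: "decomposes V E V1 V2"
    and "set as = V1 - V2" "set bs = V2 - V1" "set cs = V1 \<inter> V2" "set cs' = V1 \<inter> V2"
  shows "elim_fill E (as @ bs @ cs) {} \<subseteq>
    E \<union> elim_fill (induced E V1) (as @ cs) {} \<union> elim_fill (induced E V2) (bs @ cs') {}"
proof -
  let ?C = "V1 \<inter> V2" and ?E1 = "induced E V1" and ?E2 = "induced E V2"
  define H1 where "H1 = elim_fill E as V2"
  define H2 where "H2 = elim_fill H1 bs ?C"
  have sep: "\<forall>u\<in>V1 - V2. \<forall>v\<in>V2 - V1. {u, v} \<notin> E" and clique: "pairs ?C \<subseteq> E"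
    using dec by (auto simp: decomposes_def pairs_subset_iff_complete_in)
  have "H1 \<subseteq> E \<union> elim_fill ?E1 as (V2 \<inter> V1)"
    unfolding H1_def using assms(2) sep by (intro elim_fill_induced) (auto simp: insert_commute)
  moreover have "elim_fill ?E1 as (V2 \<inter> V1) \<subseteq> elim_fill ?E1 (as @ cs) {}"
    using subset_elim_fill assms(4) by (simp add: elim_fill_append Int_commute)
  ultimately have H1: "H1 \<subseteq> E \<union> elim_fill ?E1 (as @ cs) {}" by blast
  have "set (as @ cs) \<union> {} = V1"
    using assms(2,4) by auto
  then have "elim_fill ?E1 (as @ cs) {} \<subseteq> E \<union> pairs V1"
    using elim_fill_subset_pairs[of ?E1 "as @ cs" "{}"] by (auto simp: induced_def)
  have "induced H1 V2 \<subseteq> ?E2"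
  proof
    fix e assume e: "e \<in> induced H1 V2"
    then have "e \<in> E \<or> e \<in> pairs V1" "e \<subseteq> V2"
      using H1 \<open>elim_fill ?E1 (as @ cs) {} \<subseteq> E \<union> pairs V1\<close> by (auto simp: induced_def)
    then have "e \<in> E"
      using clique unfolding pairs_def by blast
    with \<open>e \<subseteq> V2\<close> show "e \<in> ?E2" by (simp add: induced_def)
  qed
  have "elim_fill (induced H1 V2) bs (?C \<inter> V2) \<subseteq> elim_fill ?E2 bs ?C"
    using \<open>induced H1 V2 \<subseteq> ?E2\<close> by (intro elim_fill_mono) auto
  also have "\<dots> \<subseteq> elim_fill ?E2 (bs @ cs') {}"
    using subset_elim_fill assms(5) by (simp add: elim_fill_append)
  finally have "elim_fill (induced H1 V2) bs (?C \<inter> V2) \<subseteq> elim_fill ?E2 (bs @ cs') {}" .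
  moreover have "H2 \<subseteq> H1 \<union> elim_fill (induced H1 V2) bs (?C \<inter> V2)"
    unfolding H2_def using assms(3) by (intro elim_fill_induced) auto
  ultimately have H2: "H2 \<subseteq> H1 \<union> elim_fill ?E2 (bs @ cs') {}" by blast
  have "set (bs @ cs) \<union> {} = V2" "set cs \<union> {} = ?C"
    using assms(3,4) by auto
  then have "elim_fill E (as @ bs @ cs) {} = elim_fill H2 cs {}"
    by (simp only: H1_def H2_def elim_fill_append)
  also have "\<dots> \<subseteq> H2 \<union> pairs ?C"
    using elim_fill_subset_pairs[of H2 cs "{}"] assms(4) by simp
  finally show ?thesis
    using H1 H2 clique by blast
qed

lemma elim_fill_induced_subset: "set xs \<subseteq> W \<Longrightarrow> elim_fill (induced E W) xs {} \<subseteq> E \<union> pairs W"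
  using elim_fill_subset_pairs[of "induced E W" xs "{}"] pairs_mono[of "set xs" W]
  by (auto simp: induced_def)

lemma bartlett_order_clique_last:
  assumes "distinct xs" "bartlett_order E xs" "K \<subseteq> set xs" "complete_in K E"
  shows "\<exists>ys ks. distinct (ys @ ks) \<and> set (ys @ ks) = set xs \<and> set ks = K \<and> bartlett_order E (ys @ ks)"
  using elim_fill_clique_last[OF assms(1,3,4)] assms(2)
  unfolding bartlett_order_def by (metis no_fill_triangle_antimono order_refl)

lemma bartlett_order_decomposition:
  assumes dec: "decomposes V E V1 V2"
    and "set as = V1 - V2" "set bs = V2 - V1" "set cs = V1 \<inter> V2" "set cs' = V1 \<inter> V2"
    and "bartlett_order (induced E V1) (as @ cs)" "bartlett_order (induced E V2) (bs @ cs')"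
  shows "bartlett_order E (as @ bs @ cs)"
proof -
  let ?G1 = "elim_fill (induced E V1) (as @ cs) {}" and ?G2 = "elim_fill (induced E V2) (bs @ cs') {}"
  have "induced E V1 \<subseteq> E" "induced E V2 \<subseteq> E"
    by (auto simp: induced_def)
  then have "no_fill_triangle E ?G1" "no_fill_triangle E ?G2"
    using assms(6,7) no_fill_triangle_antimono unfolding bartlett_order_def by blast+
  moreover have "?G1 \<subseteq> E \<union> pairs V1" "?G2 \<subseteq> E \<union> pairs V2"
    using assms(2-5) by (auto intro!: elim_fill_induced_subset)
  moreover have "complete_in (V1 \<inter> V2) E"
    using dec by (simp add: decomposes_def)
  ultimately have "no_fill_triangle E (E \<union> ?G1 \<union> ?G2)"
    by (rule no_fill_triangle_Un)
  then show ?thesis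
    unfolding bartlett_order_def
    using elim_fill_decomposition[OF assms(1-5)] no_fill_triangle_antimono by blast
qed

text \<open>\<open>xs\<close> lists the vertices in the order \<open>\<sigma>\<close>; positions count from 0, \<open>\<sigma>\<close> from 1.\<close>
definition order_list :: "('a \<Rightarrow> nat) \<Rightarrow> 'a list \<Rightarrow> bool" where
  "order_list \<sigma> xs \<longleftrightarrow> (\<forall>i<length xs. \<sigma> (xs ! i) = Suc i)"

lemma order_list_inj_on: "order_list \<sigma> xs \<Longrightarrow> inj_on \<sigma> (set xs)"
  by (auto simp: order_list_def inj_on_def in_set_conv_nth)

lemma order_list_distinct: "order_list \<sigma> xs \<Longrightarrow> distinct xs"
  unfolding distinct_conv_nth order_list_def by (metis Suc_inject)

lemma set_drop_order_list: "order_list \<sigma> xs \<Longrightarrow> set (drop k xs) = {u \<in> set xs. k < \<sigma> u}"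
  by (auto simp: order_list_def drop_eq_nths set_nths in_set_conv_nth)

lemma fill_eq_elim_fill:
  assumes \<sigma>: "order_list \<sigma> xs" and V: "set xs = V"
  shows "k \<le> length xs \<Longrightarrow> fill V \<sigma> E k = elim_fill E (take k xs) (set (drop k xs))"
proof (induction k)
  case (Suc k)
  then have k: "k < length xs" by simp
  let ?F = "fill V \<sigma> E k" and ?R = "set (drop (Suc k) xs)"
  have "the_inv_into V \<sigma> (Suc k) = xs ! k"
    using \<sigma> k V by (metis order_list_def order_list_inj_on nth_mem the_inv_into_f_f)
  then have "elim_edges ?F (xs ! k) ?R = {{u, v} | u v. u \<noteq> v \<and> u \<in> V \<and> v \<in> V \<and>
      \<sigma> u > Suc k \<and> \<sigma> v > Suc k \<and>
      {u, the_inv_into V \<sigma> (Suc k)} \<in> ?F \<and> {v, the_inv_into V \<sigma> (Suc k)} \<in> ?F}"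
    using set_drop_order_list[OF \<sigma>] V by (simp add: elim_edges_def conj_ac)
  moreover have "set (drop k xs) = set [xs ! k] \<union> ?R"
    using k by (simp add: Cons_nth_drop_Suc[symmetric])
  ultimately show ?case
    using Suc k by (simp add: take_Suc_conv_app_nth elim_fill_append)
qed simp

lemma D_eq_elim_fill:
  assumes "order_list \<sigma> xs" "set xs = V"
  shows "D V \<sigma> E = elim_fill E xs {}"
proof -
  let ?m = "length xs - 2"
  have "card V = length xs"
    using assms distinct_card order_list_distinct by blast
  then have "D V \<sigma> E = elim_fill E (take ?m xs) (set (drop ?m xs))"
    unfolding D_def using fill_eq_elim_fill[OF assms] by simp
  also have "\<dots> = elim_fill \<dots> (drop ?m xs) {}"
    by (simp add: elim_fill_short)
  also have "\<dots> = elim_fill E xs {}"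
    using elim_fill_append[of E "take ?m xs" "drop ?m xs" "{}"] by simp
  finally show ?thesis .
qed

lemma order_list_exists:
  assumes "bij_betw \<sigma> V {1..card V}"
  shows "\<exists>xs. order_list \<sigma> xs \<and> set xs = V"
proof -
  let ?xs = "map (\<lambda>i. the_inv_into V \<sigma> (Suc i)) [0..<card V]"
  have "order_list \<sigma> ?xs"
    using assms by (auto simp: order_list_def intro!: f_the_inv_into_f_bij_betw)
  moreover have "set ?xs = the_inv_into V \<sigma> ` {1..card V}"
    by (auto simp: image_iff Bex_def) (metis Suc_le_eq Suc_pred' less_Suc_eq_le)
  then have "set ?xs = V"
    using bij_betw_the_inv_into[OF assms] by (simp add: bij_betw_def)
  ultimately show ?thesis by blast
qed

lemma order_list_of_distinct:
  assumes "distinct xs"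
  shows "\<exists>\<sigma>. bij_betw \<sigma> (set xs) {1..card (set xs)} \<and> order_list \<sigma> xs"
proof -
  let ?idx = "the_inv_into {..<length xs} ((!) xs)"
  have idx: "bij_betw ?idx (set xs) {..<length xs}"
    using bij_betw_the_inv_into[OF bij_betw_nth[OF assms]] by simp
  have "bij_betw Suc {..<length xs} {1..card (set xs)}"
    using distinct_card[OF assms]
    by (simp add: bij_betw_def lessThan_atLeast0 image_Suc_atLeastLessThan
        atLeastLessThanSuc_atLeastAtMost)
  then have "bij_betw (Suc \<circ> ?idx) (set xs) {1..card (set xs)}"
    using idx by (rule bij_betw_trans[rotated])
  moreover have "order_list (Suc \<circ> ?idx) xs"
    using assms by (auto simp: order_list_def intro!: the_inv_into_f_f inj_on_nth)
  ultimately show ?thesis by blast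
qed

lemma gen_bartlett_iff_bartlett_order:
  "gen_bartlett V E \<longleftrightarrow> (\<exists>xs. distinct xs \<and> set xs = V \<and> bartlett_order E xs)"
proof
  assume "gen_bartlett V E"
  then obtain \<sigma> where \<sigma>: "bij_betw \<sigma> V {1..card V}" "no_fill_triangle E (D V \<sigma> E)"
    unfolding gen_bartlett_def no_fill_triangle_def by blast
  then obtain xs where "order_list \<sigma> xs" "set xs = V"
    using order_list_exists by blast
  then show "\<exists>xs. distinct xs \<and> set xs = V \<and> bartlett_order E xs"
    using \<sigma>(2) D_eq_elim_fill order_list_distinct unfolding bartlett_order_def by metis
next
  assume "\<exists>xs. distinct xs \<and> set xs = V \<and> bartlett_order E xs"
  then obtain xs where xs: "distinct xs" "set xs = V" "bartlett_order E xs" by blast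
  then obtain \<sigma> where "bij_betw \<sigma> V {1..card V}" "order_list \<sigma> xs"
    using order_list_of_distinct by blast
  then show "gen_bartlett V E"
    using xs D_eq_elim_fill unfolding gen_bartlett_def bartlett_order_def no_fill_triangle_def by metis
qed

lemma gen_bartlett_decomposition:
  assumes dec: "decomposes V E V1 V2"
    and "gen_bartlett V1 (induced E V1)" "gen_bartlett V2 (induced E V2)"
  shows "gen_bartlett V E"
proof -
  let ?C = "V1 \<inter> V2"
  have "complete_in ?C (induced E V1)" "complete_in ?C (induced E V2)"
    using dec by (auto simp: decomposes_def complete_in_def induced_def)
  moreover obtain xs1 xs2 where
    "distinct xs1" "set xs1 = V1" "bartlett_order (induced E V1) xs1"
    "distinct xs2" "set xs2 = V2" "bartlett_order (induced E V2) xs2"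
    using assms(2,3) unfolding gen_bartlett_iff_bartlett_order by blast
  ultimately obtain as cs bs cs' where
    as_cs: "distinct (as @ cs)" "set (as @ cs) = V1" "set cs = ?C"
      "bartlett_order (induced E V1) (as @ cs)" and
    bs_cs': "distinct (bs @ cs')" "set (bs @ cs') = V2" "set cs' = ?C"
      "bartlett_order (induced E V2) (bs @ cs')"
    using bartlett_order_clique_last[of xs1 "induced E V1" ?C]
      bartlett_order_clique_last[of xs2 "induced E V2" ?C] by (metis Int_lower1 Int_lower2)
  have "set as = V1 - V2" "set bs = V2 - V1"
    using as_cs(1-3) bs_cs'(1-3) by auto
  then have "bartlett_order E (as @ bs @ cs)"
    using bartlett_order_decomposition[OF dec] as_cs(3,4) bs_cs'(3,4) by blast
  moreover have "distinct (as @ bs @ cs)" "set (as @ bs @ cs) = V"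
    using as_cs(1-3) bs_cs'(1) \<open>set as = V1 - V2\<close> \<open>set bs = V2 - V1\<close> dec
    by (auto simp: decomposes_def)
  ultimately show ?thesis
    unfolding gen_bartlett_iff_bartlett_order by blast
qed

theorem lemma3:
  fixes V :: "'a set" and E :: "'a set set"
  assumes "graph V E"
    and "\<forall>W F. prime_comp V E W F \<longrightarrow> gen_bartlett W F"
  shows "gen_bartlett V E"
proof -
  have "finite V"
    using assms(1) by (simp add: graph_def)
  then show ?thesis
    using assms(2)
  proof (induction V arbitrary: E rule: finite_psubset_induct)
    case (psubset V)
    show ?case
    proof (cases "prime_graph V E")
      case True
      then show ?thesis
        using psubset.prems prime_comp.self by blast
    next
      case False
      then obtain V1 V2 where dec: "decomposes V E V1 V2"
        by (auto simp: prime_graph_def)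
      then have "V1 \<subset> V" "V2 \<subset> V"
        by (auto simp: decomposes_def)
      moreover have "\<forall>W F. prime_comp V1 (induced E V1) W F \<longrightarrow> gen_bartlett W F"
        using psubset.prems prime_comp.left[OF dec] by blast
      moreover have "\<forall>W F. prime_comp V2 (induced E V2) W F \<longrightarrow> gen_bartlett W F"
        using psubset.prems prime_comp.right[OF dec] by blast
      ultimately show ?thesis
        using gen_bartlett_decomposition[OF dec] psubset.IH by blast
    qed
  qed
qed

end
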